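(* Fix $\alpha>1$, a Pufferfish scenario $(\mathcal S,\mathcal Q,\Theta)$ and a slice profile $(\mathcal U,\omega)$. If a mechanism $\mathcal M$ satisfies $(\alpha,\epsilon,\omega)$-Joint-SRPP in $(\mathcal S,\mathcal Q,\Theta)$, then for any $\delta\in(0,1)$ it satisfies $(\epsilon',\delta,\omega)$-Joint-SPP in $(\mathcal S,\mathcal Q,\Theta)$ with $\epsilon'=\epsilon+\frac{\log(1/\delta)}{\alpha-1}$.
   Context: Pufferfish scenario: secrets $\mathcal S$, pairs $\mathcal Q\subseteq\mathcal S\times\mathcal S$, priors $\Theta$, each a joint law of secret $S$ and dataset $X$ with secret marginal $P^S_\theta$; $\mathcal M^\theta_s$ is the law of $\mathcal M(X)\in\mathbb R^d$ given $S=s$ under $\theta$. Slice profile: $\mathcal U\subseteq\mathbb S^{d-1}$, $\omega$ a probability measure on the unit sphere supported on $\mathcal U$; $\Psi^u(a)=\langle a,u\rangle$, $\Psi^u_\#$ pushforward. $\mathtt D_\alpha$ is R\'enyi divergence. $\mathcal M$ is $(\alpha,\epsilon,\omega)$-Joint-SRPP if $\frac1{\alpha-1}\log\int\exp((\alpha-1)\mathtt D_\alpha(\Psi^u_\#\mathcal M^\theta_{s_i}\|\Psi^u_\#\mathcal M^\theta_{s_j}))\,d\omega(u)\le\epsilon$ for all $\theta\in\Theta$ and $(s_i,s_j)\in\mathcal Q$ with $P^S_\theta(s_i),P^S_\theta(s_j)>0$. Joint-SPP: let $V\sim\omega$ be independent of $X$ and of the internal randomness of $\mathcal M$, and $\widetilde{\mathcal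 M}(X)=(V,\Psi^V(\mathcal M(X)))$. $\mathcal M$ is $(\varepsilon,\delta,\omega)$-Joint-SPP if for all such $\theta$, $(s_i,s_j)$ and measurable $A$, $\Pr(\widetilde{\mathcal M}(X)\in A\mid s_i,\theta)\le e^\varepsilon\Pr(\widetilde{\mathcal M}(X)\in A\mid s_j,\theta)+\delta$. *)

theory Defs
  imports "HOL-Probability.Probability"
begin

(* Renyi divergence D_alpha(P || Q) for alpha > 1 (the only case used):
   (1/(alpha-1)) log \<integral> (dP/dQ)^alpha dQ if P << Q, and +infinity otherwise
   (also +infinity if the integral diverges). *)
definition renyi_div :: "real \<Rightarrow> 'b measure \<Rightarrow> 'b measure \<Rightarrow> ereal" where
  "renyi_div \<alpha> P Q =
     (let I = (\<integral>\<^sup>+ x. ennreal (enn2real (RN_deriv Q P x) powr \<alpha>) \<partial>Q) in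
      if absolutely_continuous Q P \<and> I < \<infinity>
      then ereal (ln (enn2real I) / (\<alpha> - 1)) else \<infinity>)"

definition exp_scaled :: "real \<Rightarrow> ereal \<Rightarrow> ennreal" where
  "exp_scaled \<alpha> D = (if D = \<infinity> then \<infinity> else ennreal (exp ((\<alpha> - 1) * real_of_ereal D)))"

definition slice_push :: "'a::euclidean_space \<Rightarrow> 'a measure \<Rightarrow> real measure" where
  "slice_push u \<mu> = distr \<mu> borel (\<lambda>a. a \<bullet> u)"

(* A prior theta is a joint law of (S, X) on (secrets x datasets).
   P^S_theta(s) = Pr(S = s) under theta. *)
definition secret_prob :: "('s \<times> 'x) measure \<Rightarrow> 's \<Rightarrow> real" where
  "secret_prob \<theta> s = measure \<theta> {z \<in> space \<theta>. fst z = s}"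

(* M^theta_s: law of M(X) given S = s under theta; M is a Markov kernel from
   datasets to output distributions (capturing the internal randomness). *)
definition cond_out :: "('s \<times> 'x) measure \<Rightarrow> ('x \<Rightarrow> 'a measure) \<Rightarrow> 's \<Rightarrow> 'a measure" where
  "cond_out \<theta> M s = bind (uniform_measure \<theta> {z \<in> space \<theta>. fst z = s}) (\<lambda>z. M (snd z))"

(* Law of tilde M(X) = (V, Psi^V(M(X))) given S = s, V ~ omega independent of X and of
   the internal randomness of M. *)
definition sliced_out :: "'a::euclidean_space measure \<Rightarrow> ('s \<times> 'x) measure \<Rightarrow> ('x \<Rightarrow> 'a measure)
     \<Rightarrow> 's \<Rightarrow> ('a \<times> real) measure" where
  "sliced_out \<omega> \<theta> M s = distr (\<omega> \<Otimes>\<^sub>M cond_out \<theta> M s) borel (\<lambda>(u, y). (u, y \<bullet> u))"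

definition joint_SRPP :: "real \<Rightarrow> real \<Rightarrow> 'a::euclidean_space measure \<Rightarrow> ('s \<times> 'x) measure set
     \<Rightarrow> ('s \<times> 's) set \<Rightarrow> ('x \<Rightarrow> 'a measure) \<Rightarrow> bool" where
  "joint_SRPP \<alpha> \<epsilon> \<omega> \<Theta> Q M \<longleftrightarrow>
     (\<forall>\<theta>\<in>\<Theta>. \<forall>(si, sj)\<in>Q. secret_prob \<theta> si > 0 \<and> secret_prob \<theta> sj > 0 \<longrightarrow>
        (let I = (\<integral>\<^sup>+ u. exp_scaled \<alpha>
                    (renyi_div \<alpha> (slice_push u (cond_out \<theta> M si)) (slice_push u (cond_out \<theta> M sj))) \<partial>\<omega>)
         in I < \<infinity> \<and> ln (enn2real I) / (\<alpha> - 1) \<le> \<epsilon>))"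

definition joint_SPP :: "real \<Rightarrow> real \<Rightarrow> 'a::euclidean_space measure \<Rightarrow> ('s \<times> 'x) measure set
     \<Rightarrow> ('s \<times> 's) set \<Rightarrow> ('x \<Rightarrow> 'a measure) \<Rightarrow> bool" where
  "joint_SPP \<epsilon> \<delta> \<omega> \<Theta> Q M \<longleftrightarrow>
     (\<forall>\<theta>\<in>\<Theta>. \<forall>(si, sj)\<in>Q. secret_prob \<theta> si > 0 \<and> secret_prob \<theta> sj > 0 \<longrightarrow>
        (\<forall>A \<in> sets (borel :: ('a \<times> real) measure).
           measure (sliced_out \<omega> \<theta> M si) A \<le> exp \<epsilon> * measure (sliced_out \<omega> \<theta> M sj) A + \<delta>))"

end

theory Submission
  imports Defs
begin

(* For K > 0, Young's inequality gives g <= c1 g^alpha + c2 with c1 = 1 / (alpha K^(alpha-1)) and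
   c2 = K (alpha-1) / alpha.  Applied to the density g = dP/dQ of the two sliced laws in a direction u
   and integrated over a Borel set B, it bounds P(B) by c1 exp((alpha-1) D_alpha(P || Q)) + c2 Q(B).
   Integrating over u against omega turns the first term into the Joint-SRPP moment, which is at most
   exp((alpha-1) eps).  The choice K = exp eps' makes c1 exp((alpha-1) eps) = delta / alpha <= delta
   and c2 <= K. *)

lemma Young_linear_bound:
  fixes \<alpha> K g :: real
  assumes \<alpha>: "\<alpha> > 1" and K: "K > 0" and g: "g \<ge> 0"
  shows "g \<le> g powr \<alpha> / (\<alpha> * K powr (\<alpha> - 1)) + K * (\<alpha> - 1) / \<alpha>"
proof (cases "g = 0")
  case True
  then show ?thesis using \<alpha> K by simp
next
  case False
  with g have g_pos: "g > 0" by simp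
  let ?a = "g powr \<alpha> / K powr (\<alpha> - 1)"
  have "?a powr (1/\<alpha>) * K powr (1 - 1/\<alpha>) \<le> (1/\<alpha>) * ?a + (1 - 1/\<alpha>) * K"
    by (rule Youngs_inequality_0) (use \<alpha> K g_pos in auto)
  moreover have "?a powr (1/\<alpha>) * K powr (1 - 1/\<alpha>) = g"
  proof -
    have "?a powr (1/\<alpha>) = g / K powr ((\<alpha> - 1) / \<alpha>)"
      using \<alpha> K g_pos by (simp add: powr_divide powr_powr)
    moreover have "(\<alpha> - 1) / \<alpha> = 1 - 1/\<alpha>"
      using \<alpha> by (simp add: field_simps)
    ultimately show ?thesis using K by simp
  qed
  moreover have "(1/\<alpha>) * ?a + (1 - 1/\<alpha>) * K = g powr \<alpha> / (\<alpha> * K powr (\<alpha> - 1)) + K * (\<alpha> - 1) / \<alpha>"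
    using \<alpha> by (simp add: field_simps)
  ultimately show ?thesis by simp
qed

lemma ennreal_Young_linear_bound:
  fixes \<alpha> K :: real and x :: ennreal
  assumes \<alpha>: "\<alpha> > 1" and K: "K > 0" and x: "x \<noteq> \<infinity>"
  shows "x \<le> ennreal (1 / (\<alpha> * K powr (\<alpha> - 1))) * ennreal (enn2real x powr \<alpha>) + ennreal (K * (\<alpha> - 1) / \<alpha>)"
proof -
  have "x = ennreal (enn2real x)"
    using x by (simp add: ennreal_enn2real_if)
  also have "\<dots> \<le> ennreal (1 / (\<alpha> * K powr (\<alpha> - 1)) * enn2real x powr \<alpha> + K * (\<alpha> - 1) / \<alpha>)"
    using Young_linear_bound[OF \<alpha> K, of "enn2real x"] by (intro ennreal_leI) simp
  also have "\<dots> = ennreal (1 / (\<alpha> * K powr (\<alpha> - 1))) * ennreal (enn2real x powr \<alpha>) + ennreal (K * (\<alpha> - 1) / \<alpha>)"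
    using \<alpha> K by (simp add: ennreal_plus ennreal_mult del: times_divide_eq_left)
  finally show ?thesis .
qed

lemma ennreal_le_exp_if_ln_le:
  assumes "I < \<infinity>" and "ln (enn2real I) \<le> c"
  shows "I \<le> ennreal (exp c)"
proof (cases "enn2real I = 0")
  case True
  with assms(1) have "I = 0"
    by (auto simp: enn2real_eq_0_iff)
  then show ?thesis by simp
next
  case False
  then have "enn2real I = exp (ln (enn2real I))"
    by (simp add: order_neq_le_trans)
  also have "\<dots> \<le> exp c"
    using assms(2) by simp
  finally have "ennreal (enn2real I) \<le> ennreal (exp c)"
    by (rule ennreal_leI)
  with assms(1) show ?thesis
    by simp
qed

lemma renyi_moment_le_exp_scaled:
  assumes "\<alpha> > 1"
  shows "(\<integral>\<^sup>+ x. ennreal (enn2real (RN_deriv Q P x) powr \<alpha>) \<partial>Q) \<le> exp_scaled \<alpha> (renyi_div \<alpha> P Q)"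
    (is "?I \<le> _")
proof (cases "absolutely_continuous Q P \<and> ?I < \<infinity>")
  case True
  then have "exp_scaled \<alpha> (renyi_div \<alpha> P Q) = ennreal (exp (ln (enn2real ?I)))"
    using assms unfolding renyi_div_def exp_scaled_def Let_def by simp
  then show ?thesis
    using True ennreal_le_exp_if_ln_le[of ?I "ln (enn2real ?I)"] by simp
next
  case False
  then have "renyi_div \<alpha> P Q = \<infinity>"
    unfolding renyi_div_def Let_def by argo
  then show ?thesis
    by (simp add: exp_scaled_def)
qed

lemma emeasure_le_exp_scaled_renyi:
  fixes P Q :: "'b measure" and \<alpha> K :: real
  assumes \<alpha>: "\<alpha> > 1" and K: "K > 0"
    and P: "sigma_finite_measure P" and Q: "sigma_finite_measure Q" and sets_eq: "sets P = sets Q"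
    and B: "B \<in> sets Q"
  shows "emeasure P B \<le> ennreal (1 / (\<alpha> * K powr (\<alpha> - 1))) * exp_scaled \<alpha> (renyi_div \<alpha> P Q)
           + ennreal (K * (\<alpha> - 1) / \<alpha>) * emeasure Q B"
proof -
  interpret Q: sigma_finite_measure Q by fact
  define c1 where "c1 = 1 / (\<alpha> * K powr (\<alpha> - 1))"
  define c2 where "c2 = K * (\<alpha> - 1) / \<alpha>"
  have c1: "c1 > 0"
    unfolding c1_def using \<alpha> K by simp
  define f where "f = RN_deriv Q P"
  show ?thesis
  proof (cases "absolutely_continuous Q P")
    case False
    then have "exp_scaled \<alpha> (renyi_div \<alpha> P Q) = \<infinity>"
      unfolding renyi_div_def exp_scaled_def Let_def by simp
    then show ?thesis
      using c1 by (simp add: c1_def[symmetric] ennreal_mult_top)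
  next
    case ac: True
    have f_meas: "f \<in> borel_measurable Q"
      unfolding f_def by simp
    have "AE x in Q. f x \<noteq> \<infinity>"
      unfolding f_def by (rule Q.RN_deriv_finite[OF P ac sets_eq])
    then have pointwise: "AE x in Q. f x * indicator B x
        \<le> ennreal c1 * ennreal (enn2real (f x) powr \<alpha>) + ennreal c2 * indicator B x"
      by eventually_elim
        (simp split: split_indicator add: c1_def c2_def ennreal_Young_linear_bound[OF \<alpha> K])
    have "emeasure P B = emeasure (density Q f) B"
      unfolding f_def by (simp add: Q.density_RN_deriv[OF ac sets_eq])
    also have "\<dots> = (\<integral>\<^sup>+ x\<in>B. f x \<partial>Q)"
      using B f_meas by (simp add: emeasure_density)
    also have "\<dots> \<le> (\<integral>\<^sup>+ x. ennreal c1 * ennreal (enn2real (f x) powr \<alpha>) + ennreal c2 * indicator B x \<partial>Q)"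
      by (rule nn_integral_mono_AE[OF pointwise])
    also have "\<dots> = ennreal c1 * (\<integral>\<^sup>+ x. ennreal (enn2real (f x) powr \<alpha>) \<partial>Q) + ennreal c2 * emeasure Q B"
      using B f_meas by (simp add: nn_integral_add nn_integral_cmult)
    also have "\<dots> \<le> ennreal c1 * exp_scaled \<alpha> (renyi_div \<alpha> P Q) + ennreal c2 * emeasure Q B"
      using renyi_moment_le_exp_scaled[OF \<alpha>, of Q P] unfolding f_def
      by (intro add_mono mult_left_mono) auto
    finally show ?thesis
      unfolding c1_def c2_def .
  qed
qed

lemma ennreal_affine_bound_minorant:
  fixes x y z :: ennreal and c1 c2 :: real
  assumes c1: "c1 > 0" and c2: "c2 \<ge> 0" and x: "x \<noteq> \<infinity>" and z: "z \<noteq> \<infinity>"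
    and le: "x \<le> ennreal c1 * y + ennreal c2 * z"
  defines "m \<equiv> ennreal ((enn2real x - c2 * enn2real z) / c1)"
  shows "x \<le> ennreal c1 * m + ennreal c2 * z" and "m \<le> y"
proof -
  obtain xr zr where xr: "x = ennreal xr" "xr \<ge> 0" and zr: "z = ennreal zr" "zr \<ge> 0"
    using x z by (cases x; cases z) auto
  then have m: "m = ennreal ((xr - c2 * zr) / c1)"
    unfolding m_def by simp
  show "x \<le> ennreal c1 * m + ennreal c2 * z"
  proof (cases "xr \<le> c2 * zr")
    case True
    then have "x \<le> ennreal c2 * z"
      using c2 xr zr by (simp add: ennreal_mult[symmetric])
    then show ?thesis
      by (simp add: add_increasing)
  next
    case False
    then have "ennreal c1 * m + ennreal c2 * z = ennreal (c1 * ((xr - c2 * zr) / c1) + c2 * zr)"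
      using c1 c2 zr by (simp add: m ennreal_mult[symmetric] ennreal_plus[symmetric])
    also have "c1 * ((xr - c2 * zr) / c1) + c2 * zr = xr"
      using c1 by simp
    finally show ?thesis
      using xr by simp
  qed
  show "m \<le> y"
  proof (cases y)
    case (real yr)
    have "ennreal c1 * y + ennreal c2 * z = ennreal (c1 * yr + c2 * zr)"
      using real zr c1 c2 by (simp add: ennreal_mult ennreal_plus)
    with le xr have "ennreal xr \<le> ennreal (c1 * yr + c2 * zr)"
      by simp
    moreover have "0 \<le> c1 * yr + c2 * zr"
      using real zr c1 c2 by simp
    ultimately have "xr \<le> c1 * yr + c2 * zr"
      using ennreal_le_iff by blast
    then have "(xr - c2 * zr) / c1 \<le> yr"
      using c1 by (simp add: field_simps)
    then show ?thesis
      using real by (simp add: m ennreal_leI)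
  qed simp
qed

lemma nn_integral_le_cmult_add:
  fixes p q X :: "'b \<Rightarrow> ennreal" and c1 c2 :: real
  assumes c1: "c1 > 0" and c2: "c2 \<ge> 0"
    and p: "p \<in> borel_measurable N" "\<And>u. p u \<noteq> \<infinity>"
    and q: "q \<in> borel_measurable N" "\<And>u. q u \<noteq> \<infinity>"
    and le: "\<And>u. p u \<le> ennreal c1 * X u + ennreal c2 * q u"
  shows "(\<integral>\<^sup>+ u. p u \<partial>N) \<le> ennreal c1 * (\<integral>\<^sup>+ u. X u \<partial>N) + ennreal c2 * (\<integral>\<^sup>+ u. q u \<partial>N)"
proof -
  \<comment> \<open>\<open>X\<close> need not be measurable, so additivity of the integral is applied to a measurable minorant.\<close>
  define m where "m u = ennreal ((enn2real (p u) - c2 * enn2real (q u)) / c1)" for u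
  have m_meas: "m \<in> borel_measurable N"
    unfolding m_def using p q by measurable
  note minorant = ennreal_affine_bound_minorant[OF c1 c2 p(2) q(2) le, folded m_def]
  have "(\<integral>\<^sup>+ u. p u \<partial>N) \<le> (\<integral>\<^sup>+ u. ennreal c1 * m u + ennreal c2 * q u \<partial>N)"
    by (intro nn_integral_mono minorant(1))
  also have "\<dots> = ennreal c1 * (\<integral>\<^sup>+ u. m u \<partial>N) + ennreal c2 * (\<integral>\<^sup>+ u. q u \<partial>N)"
    using m_meas q(1) by (simp add: nn_integral_add nn_integral_cmult)
  also have "\<dots> \<le> ennreal c1 * (\<integral>\<^sup>+ u. X u \<partial>N) + ennreal c2 * (\<integral>\<^sup>+ u. q u \<partial>N)"
    by (intro add_mono mult_left_mono nn_integral_mono minorant(2)) auto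
  finally show ?thesis .
qed

definition sliced_law :: "'a::euclidean_space measure \<Rightarrow> 'a measure \<Rightarrow> ('a \<times> real) measure" where
  "sliced_law \<omega> P = distr (\<omega> \<Otimes>\<^sub>M P) borel (\<lambda>(u, y). (u, y \<bullet> u))"

lemma sliced_out_eq_sliced_law: "sliced_out \<omega> \<theta> M s = sliced_law \<omega> (cond_out \<theta> M s)"
  unfolding sliced_out_def sliced_law_def ..

lemma sets_slice_push[simp]: "sets (slice_push u P) = sets borel"
  unfolding slice_push_def by simp

lemma prob_space_slice_push:
  assumes "prob_space P" and "sets P = sets borel"
  shows "prob_space (slice_push u P)"
  unfolding slice_push_def
  by (rule prob_space.prob_space_distr[OF assms(1)]) (simp add: measurable_cong_sets[OF assms(2) refl])

lemma measurable_slice_coordinates: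
  fixes \<omega> P :: "'a::euclidean_space measure"
  assumes "sets \<omega> = sets borel" and "sets P = sets borel"
  shows "(\<lambda>(u, y). (u, y \<bullet> u)) \<in> \<omega> \<Otimes>\<^sub>M P \<rightarrow>\<^sub>M (borel :: ('a \<times> real) measure)"
proof -
  have sets_pair: "sets (\<omega> \<Otimes>\<^sub>M P) = sets (borel :: ('a \<times> 'a) measure)"
    using assms by (simp add: borel_prod[symmetric] cong: sets_pair_measure_cong)
  show ?thesis
    unfolding measurable_cong_sets[OF sets_pair refl]
    by (intro borel_measurable_continuous_onI) (auto simp: case_prod_beta intro!: continuous_intros)
qed

lemma prob_space_sliced_law:
  assumes "prob_space \<omega>" "sets \<omega> = sets borel" and "prob_space P" "sets P = sets borel"
  shows "prob_space (sliced_law \<omega> P)"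
proof -
  interpret pair_prob_space \<omega> P
    using assms by (simp add: pair_prob_space_def pair_sigma_finite_def prob_space_imp_sigma_finite)
  show ?thesis
    unfolding sliced_law_def by (rule P.prob_space_distr[OF measurable_slice_coordinates[OF assms(2,4)]])
qed

lemma emeasure_sliced_law:
  fixes \<omega> P :: "'a::euclidean_space measure"
  assumes \<omega>: "sets \<omega> = sets borel"
    and P: "sigma_finite_measure P" "sets P = sets borel"
    and A: "A \<in> sets borel"
  shows "emeasure (sliced_law \<omega> P) A = (\<integral>\<^sup>+ u. emeasure (slice_push u P) (Pair u -` A) \<partial>\<omega>)"
    and "(\<lambda>u. emeasure (slice_push u P) (Pair u -` A)) \<in> borel_measurable \<omega>"
proof -
  interpret P: sigma_finite_measure P by fact
  let ?\<phi> = "\<lambda>(u::'a, y::'a). (u, y \<bullet> u)"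
  have \<phi>: "?\<phi> \<in> \<omega> \<Otimes>\<^sub>M P \<rightarrow>\<^sub>M borel"
    by (rule measurable_slice_coordinates[OF \<omega> P(2)])
  let ?X = "?\<phi> -` A \<inter> space (\<omega> \<Otimes>\<^sub>M P)"
  have X: "?X \<in> sets (\<omega> \<Otimes>\<^sub>M P)"
    using \<phi> A by (rule measurable_sets)
  have slice_eq: "emeasure P (Pair u -` ?X) = emeasure (slice_push u P) (Pair u -` A)" for u
  proof -
    have "Pair u -` A \<in> sets borel"
      using A by (simp add: borel_prod[symmetric] sets_Pair1)
    then have "emeasure (slice_push u P) (Pair u -` A) = emeasure P ((\<lambda>a. a \<bullet> u) -` Pair u -` A \<inter> space P)"
      unfolding slice_push_def by (intro emeasure_distr) (simp_all add: measurable_cong_sets[OF P(2) refl])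
    also have "(\<lambda>a. a \<bullet> u) -` Pair u -` A \<inter> space P = Pair u -` ?X"
      using sets_eq_imp_space_eq[OF \<omega>] sets_eq_imp_space_eq[OF P(2)] by (auto simp: space_pair_measure)
    finally show ?thesis by simp
  qed
  have "emeasure (sliced_law \<omega> P) A = emeasure (\<omega> \<Otimes>\<^sub>M P) ?X"
    unfolding sliced_law_def by (rule emeasure_distr[OF \<phi> A])
  also have "\<dots> = (\<integral>\<^sup>+ u. emeasure P (Pair u -` ?X) \<partial>\<omega>)"
    by (rule P.emeasure_pair_measure_alt[OF X])
  finally show "emeasure (sliced_law \<omega> P) A = (\<integral>\<^sup>+ u. emeasure (slice_push u P) (Pair u -` A) \<partial>\<omega>)"
    by (simp only: slice_eq)
  show "(\<lambda>u. emeasure (slice_push u P) (Pair u -` A)) \<in> borel_measurable \<omega>"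
    using P.measurable_emeasure_Pair[OF X] by (simp only: slice_eq)
qed

lemma emeasure_sliced_law_le:
  fixes \<omega> P P' :: "'a::euclidean_space measure" and \<alpha> K :: real
  assumes \<alpha>: "\<alpha> > 1" and K: "K > 0" and \<omega>: "sets \<omega> = sets borel"
    and P: "prob_space P" "sets P = sets borel" and P': "prob_space P'" "sets P' = sets borel"
    and A: "A \<in> sets borel"
  shows "emeasure (sliced_law \<omega> P) A
    \<le> ennreal (1 / (\<alpha> * K powr (\<alpha> - 1)))
        * (\<integral>\<^sup>+ u. exp_scaled \<alpha> (renyi_div \<alpha> (slice_push u P) (slice_push u P')) \<partial>\<omega>)
      + ennreal (K * (\<alpha> - 1) / \<alpha>) * emeasure (sliced_law \<omega> P') A"
proof -
  have c1: "1 / (\<alpha> * K powr (\<alpha> - 1)) > 0" and c2: "K * (\<alpha> - 1) / \<alpha> \<ge> 0"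
    using \<alpha> K by simp_all
  note law = emeasure_sliced_law[OF \<omega> prob_space_imp_sigma_finite[OF P(1)] P(2) A]
  note law' = emeasure_sliced_law[OF \<omega> prob_space_imp_sigma_finite[OF P'(1)] P'(2) A]
  have slice_finite: "emeasure (slice_push u R) B \<noteq> \<infinity>"
    if "prob_space R" "sets R = sets borel" for u and R :: "'a measure" and B
  proof -
    interpret prob_space "slice_push u R"
      by (rule prob_space_slice_push[OF that])
    show ?thesis by simp
  qed
  have slice_bound: "emeasure (slice_push u P) (Pair u -` A)
      \<le> ennreal (1 / (\<alpha> * K powr (\<alpha> - 1))) * exp_scaled \<alpha> (renyi_div \<alpha> (slice_push u P) (slice_push u P'))
        + ennreal (K * (\<alpha> - 1) / \<alpha>) * emeasure (slice_push u P') (Pair u -` A)" for u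
  proof (rule emeasure_le_exp_scaled_renyi[OF \<alpha> K])
    show "sigma_finite_measure (slice_push u P)" "sigma_finite_measure (slice_push u P')"
      using P P' by (simp_all add: prob_space_slice_push prob_space_imp_sigma_finite)
    show "Pair u -` A \<in> sets (slice_push u P')"
      using A by (simp add: borel_prod[symmetric] sets_Pair1)
  qed simp
  show ?thesis
    unfolding law(1) law'(1)
    by (rule nn_integral_le_cmult_add[OF c1 c2 law(2) slice_finite[OF P] law'(2) slice_finite[OF P'] slice_bound])
qed

lemma measure_sliced_law_le:
  fixes \<omega> P P' :: "'a::euclidean_space measure" and \<alpha> \<epsilon> \<delta> :: real
  assumes \<alpha>: "\<alpha> > 1" and \<delta>: "\<delta> > 0"
    and \<omega>: "prob_space \<omega>" "sets \<omega> = sets borel"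
    and P: "prob_space P" "sets P = sets borel" and P': "prob_space P'" "sets P' = sets borel"
    and moment: "(\<integral>\<^sup>+ u. exp_scaled \<alpha> (renyi_div \<alpha> (slice_push u P) (slice_push u P')) \<partial>\<omega>)
      \<le> ennreal (exp ((\<alpha> - 1) * \<epsilon>))"
    and A: "A \<in> sets borel"
  shows "measure (sliced_law \<omega> P) A \<le> exp (\<epsilon> + ln (1 / \<delta>) / (\<alpha> - 1)) * measure (sliced_law \<omega> P') A + \<delta>"
proof -
  define K where "K = exp (\<epsilon> + ln (1 / \<delta>) / (\<alpha> - 1))"
  define c1 where "c1 = 1 / (\<alpha> * K powr (\<alpha> - 1))"
  define c2 where "c2 = K * (\<alpha> - 1) / \<alpha>"
  have K: "K > 0"
    unfolding K_def by simp
  have "K powr (\<alpha> - 1) = exp ((\<alpha> - 1) * \<epsilon> + ln (1 / \<delta>))"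
    unfolding K_def using \<alpha> by (simp add: powr_def field_simps)
  also have "\<dots> = exp ((\<alpha> - 1) * \<epsilon>) / \<delta>"
    using \<delta> by (simp add: exp_add)
  finally have "c1 * exp ((\<alpha> - 1) * \<epsilon>) = \<delta> / \<alpha>"
    unfolding c1_def using \<delta> by simp
  also have "\<dots> \<le> \<delta>"
    using \<alpha> \<delta> by (simp add: divide_le_eq)
  finally have c1_moment: "c1 * exp ((\<alpha> - 1) * \<epsilon>) \<le> \<delta>" .
  have c1: "c1 \<ge> 0" and c2: "c2 \<le> K"
    unfolding c1_def c2_def using \<alpha> K by (simp_all add: field_simps)
  interpret L: prob_space "sliced_law \<omega> P"
    by (rule prob_space_sliced_law[OF \<omega> P])
  interpret L': prob_space "sliced_law \<omega> P'"
    by (rule prob_space_sliced_law[OF \<omega> P'])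
  have "ennreal (L.prob A) = emeasure (sliced_law \<omega> P) A"
    by (simp add: L.emeasure_eq_measure)
  also have "\<dots> \<le> ennreal c1 * ennreal (exp ((\<alpha> - 1) * \<epsilon>)) + ennreal c2 * emeasure (sliced_law \<omega> P') A"
    unfolding c1_def c2_def
    by (rule order_trans[OF emeasure_sliced_law_le[OF \<alpha> K \<omega>(2) P P' A]]) (intro add_mono mult_left_mono moment; simp)
  also have "\<dots> \<le> ennreal \<delta> + ennreal K * ennreal (L'.prob A)"
    unfolding L'.emeasure_eq_measure using c1 c1_moment c2
    by (intro add_mono mult_right_mono) (auto simp: ennreal_mult[symmetric] ennreal_leI)
  also have "\<dots> = ennreal (\<delta> + K * L'.prob A)"
    using \<delta> K by (simp add: ennreal_mult ennreal_plus)
  finally have "L.prob A \<le> \<delta> + K * L'.prob A"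
    by (rule ennreal_le_iff[THEN iffD1, rotated]) (use \<delta> K in simp)
  then show ?thesis
    unfolding K_def by simp
qed

lemma cond_out_in_prob_algebra:
  assumes \<theta>: "prob_space \<theta>" "sets \<theta> = sets (count_space S \<Otimes>\<^sub>M Xsp)"
    and M: "M \<in> Xsp \<rightarrow>\<^sub>M prob_algebra borel" and pos: "secret_prob \<theta> s > 0"
  shows "cond_out \<theta> M s \<in> space (prob_algebra borel)"
proof -
  interpret prob_space \<theta> by fact
  let ?B = "{z \<in> space \<theta>. fst z = s}"
  have "emeasure \<theta> ?B \<noteq> 0"
    using pos unfolding secret_prob_def by (auto simp: measure_def)
  then have "uniform_measure \<theta> ?B \<in> space (prob_algebra \<theta>)"
    by (simp add: space_prob_algebra prob_space_uniform_measure)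
  moreover have "(\<lambda>z. M (snd z)) \<in> \<theta> \<rightarrow>\<^sub>M prob_algebra borel"
    using measurable_compose[OF measurable_snd M] by (simp add: measurable_cong_sets[OF \<theta>(2) refl])
  ultimately show ?thesis
    unfolding cond_out_def by (simp add: space_prob_algebra prob_space_bind' sets_bind')
qed

theorem theorem9:
  fixes \<alpha> \<epsilon> \<delta> :: real
    and \<S> :: "'s set" and Q :: "('s \<times> 's) set"
    and Xsp :: "'x measure" and \<Theta> :: "('s \<times> 'x) measure set"
    and U :: "'a::euclidean_space set" and \<omega> :: "'a measure"
    and M :: "'x \<Rightarrow> 'a measure"
  assumes "\<alpha> > 1"
    and "Q \<subseteq> \<S> \<times> \<S>"
    and "\<forall>\<theta>\<in>\<Theta>. prob_space \<theta> \<and> sets \<theta> = sets (count_space \<S> \<Otimes>\<^sub>M Xsp)"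
    and "U \<subseteq> sphere 0 1" and "U \<in> sets borel"
    and "prob_space \<omega>" and "sets \<omega> = sets borel" and "emeasure \<omega> U = 1"
    and "M \<in> Xsp \<rightarrow>\<^sub>M prob_algebra borel"
    and "joint_SRPP \<alpha> \<epsilon> \<omega> \<Theta> Q M"
    and "0 < \<delta>" and "\<delta> < 1"
  shows "joint_SPP (\<epsilon> + ln (1 / \<delta>) / (\<alpha> - 1)) \<delta> \<omega> \<Theta> Q M"
proof (unfold joint_SPP_def sliced_out_eq_sliced_law, intro ballI impI, clarify)
  fix \<theta> si sj and A :: "('a \<times> real) set"
  assume \<theta>: "\<theta> \<in> \<Theta>" and pair: "(si, sj) \<in> Q"
    and pos: "0 < secret_prob \<theta> si" "0 < secret_prob \<theta> sj" and A: "A \<in> sets borel"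
  have law: "prob_space (cond_out \<theta> M s)" "sets (cond_out \<theta> M s) = sets borel"
    if "secret_prob \<theta> s > 0" for s
    using cond_out_in_prob_algebra[of \<theta> \<S> Xsp M s] assms(3,9) \<theta> that
    by (auto simp: space_prob_algebra)
  let ?I = "\<integral>\<^sup>+ u. exp_scaled \<alpha>
    (renyi_div \<alpha> (slice_push u (cond_out \<theta> M si)) (slice_push u (cond_out \<theta> M sj))) \<partial>\<omega>"
  have "?I < \<infinity>" and "ln (enn2real ?I) / (\<alpha> - 1) \<le> \<epsilon>"
    using assms(10) \<theta> pair pos unfolding joint_SRPP_def Let_def by auto
  then have moment: "?I \<le> ennreal (exp ((\<alpha> - 1) * \<epsilon>))"
    using assms(1) by (intro ennreal_le_exp_if_ln_le) (simp_all add: field_simps)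
  show "measure (sliced_law \<omega> (cond_out \<theta> M si)) A
    \<le> exp (\<epsilon> + ln (1 / \<delta>) / (\<alpha> - 1)) * measure (sliced_law \<omega> (cond_out \<theta> M sj)) A + \<delta>"
    by (rule measure_sliced_law_le[OF assms(1,11,6,7) law[OF pos(1)] law[OF pos(2)] moment A])
qed

end
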